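(* In the DGL-test-based classification setting described in the context, with $M\ge2$, $n,N\ge1$, $\alpha=N/n$ and $D=\min_{i\neq j}V(P_i,P_j)$, the classification error probability satisfies, for every prior $(\pi_1,\dots,\pi_M)$, $$\Pr[e_{\mathrm{CL}}]\le 2M\exp\!\Big(-n\Big(\frac{2\alpha D^2}{(3|\mathcal X|+2\sqrt\alpha)^2}-\max\Big\{\frac{2\ln(M-1)}{n},\frac{\ln|\mathcal X|}{n}\Big\}\Big)\Big).$$
   Context: Setting: $\mathcal X$ is a finite alphabet and $P_1,\dots,P_M$ are (unknown) distributions on $\mathcal X$. For distributions $P,Q$ on $\mathcal X$, $V(P,Q)=\max_{F\subseteq\mathcal X}|P(F)-Q(F)|=\frac12\sum_{a}|P(a)-Q(a)|$. Training sequences $\vec t_i^{\,N}=(t_{i1},\dots,t_{iN})$, $i=1,\dots,M$, are mutually independent, with $\vec t_i^{\,N}$ i.i.d. from $P_i$; $T_i(a)=\frac1N\#\{k:t_{ik}=a\}$ is its empirical distribution, and $T_i(A)=\sum_{a\in A}T_i(a)$. Under hypothesis $\mathcal H_i$, the test sequence $\vec x^{\,n}=(x_1,\dots,x_n)$ is i.i.d. from $P_i$ and independent of the training sequences. Classifier (DGL test with nominal distributions $T_i$): let $\mathcal A=\{A_{k,l}:1\le k<l\le M\}$ with $A_{k,l}=\{a\in\mathcal X: T_k(a)\ge T_l(a)\}$, let $\mu_n(A)=\frac1n\#\{m: x_m\in A\}$, define the score $s_j=\max_{A\in\mathcal A}|T_j(A)-\mu_n(A)|$, and output any index $\hat\imath$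 minimizing $s_j$ over $j$ (ties broken arbitrarily). Given a prior $\pi_i>0$, $\sum_i\pi_i=1$, the classification error probability is $\Pr[e_{\mathrm{CL}}]=\sum_{i=1}^M\pi_i\Pr[\hat\imath\neq i\mid\mathcal H_i]$, the probability taken over both the test and training sequences. *)

theory Defs
  imports "HOL-Probability.Probability"
begin

definition tv_dist :: "'a::finite pmf \<Rightarrow> 'a pmf \<Rightarrow> real" where
  "tv_dist P Q = (\<Sum>a\<in>UNIV. \<bar>pmf P a - pmf Q a\<bar>) / 2"

definition emp :: "nat \<Rightarrow> (nat \<Rightarrow> nat \<Rightarrow> 'a) \<Rightarrow> nat \<Rightarrow> 'a \<Rightarrow> real" where
  "emp N t i a = real (card {k \<in> {1..N}. t i k = a}) / real N"

definition emp_set :: "nat \<Rightarrow> (nat \<Rightarrow> nat \<Rightarrow> 'a) \<Rightarrow> nat \<Rightarrow> 'a set \<Rightarrow> real" where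
  "emp_set N t i A = (\<Sum>a\<in>A. emp N t i a)"

definition mu_n :: "nat \<Rightarrow> (nat \<Rightarrow> 'a) \<Rightarrow> 'a set \<Rightarrow> real" where
  "mu_n n x A = real (card {m \<in> {1..n}. x m \<in> A}) / real n"

definition scheffe :: "nat \<Rightarrow> (nat \<Rightarrow> nat \<Rightarrow> 'a) \<Rightarrow> nat \<Rightarrow> nat \<Rightarrow> 'a set" where
  "scheffe N t k l = {a. emp N t k a \<ge> emp N t l a}"

definition scheffe_family :: "nat \<Rightarrow> nat \<Rightarrow> (nat \<Rightarrow> nat \<Rightarrow> 'a) \<Rightarrow> 'a set set" where
  "scheffe_family M N t = {scheffe N t k l | k l. 1 \<le> k \<and> k < l \<and> l \<le> M}"

definition dgl_score :: "nat \<Rightarrow> nat \<Rightarrow> nat \<Rightarrow> (nat \<Rightarrow> nat \<Rightarrow> 'a) \<Rightarrow> (nat \<Rightarrow> 'a) \<Rightarrow> nat \<Rightarrow> real" where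
  "dgl_score M N n t x j = Max ((\<lambda>A. \<bar>emp_set N t j A - mu_n n x A\<bar>) ` scheffe_family M N t)"

definition train_space :: "nat \<Rightarrow> nat \<Rightarrow> (nat \<Rightarrow> nat \<Rightarrow> 'a) set" where
  "train_space M N = {1..M} \<rightarrow>\<^sub>E ({1..N} \<rightarrow>\<^sub>E UNIV)"

definition test_space :: "nat \<Rightarrow> (nat \<Rightarrow> 'a) set" where
  "test_space n = {1..n} \<rightarrow>\<^sub>E UNIV"

definition joint_prob :: "nat \<Rightarrow> nat \<Rightarrow> nat \<Rightarrow> (nat \<Rightarrow> 'a pmf) \<Rightarrow> nat
    \<Rightarrow> (nat \<Rightarrow> nat \<Rightarrow> 'a) \<Rightarrow> (nat \<Rightarrow> 'a) \<Rightarrow> real" where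
  "joint_prob M N n P i t x =
     (\<Prod>j\<in>{1..M}. \<Prod>k\<in>{1..N}. pmf (P j) (t j k)) * (\<Prod>m\<in>{1..n}. pmf (P i) (x m))"

definition err_prob :: "nat \<Rightarrow> nat \<Rightarrow> nat \<Rightarrow> (nat \<Rightarrow> 'a pmf) \<Rightarrow> (nat \<Rightarrow> real)
    \<Rightarrow> ((nat \<Rightarrow> nat \<Rightarrow> 'a) \<Rightarrow> (nat \<Rightarrow> 'a) \<Rightarrow> nat) \<Rightarrow> real" where
  "err_prob M N n P \<pi> dec =
     (\<Sum>i\<in>{1..M}. \<pi> i * (\<Sum>t\<in>train_space M N. \<Sum>x\<in>test_space n.
         (if dec t x \<noteq> i then joint_prob M N n P i t x else 0)))"

end

theory Submission
  imports Defs
begin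

text \<open>
  Suppose every training distribution \<open>T\<^sub>k\<close> is pointwise \<open>\<epsilon>\<close>-close to \<open>P\<^sub>k\<close> and, under \<open>H\<^sub>i\<close>, the
  test measure \<open>\<mu>\<^sub>n\<close> is \<open>\<delta>\<close>-close to \<open>P\<^sub>i\<close> on every Scheffe set. Then each \<open>T\<^sub>k(A)\<close> is within
  \<open>|X|\<epsilon>/2\<close> of \<open>P\<^sub>k(A)\<close>, so \<open>s\<^sub>i < |X|\<epsilon>/2 + \<delta>\<close>; and the Scheffe set \<open>A\<close> of the pair \<open>{i, j}\<close>
  separates the two empirical distributions by more than \<open>V(P\<^sub>i, P\<^sub>j) - |X|\<epsilon>\<close>, a quantity at most
  \<open>s\<^sub>i + s\<^sub>j\<close>. Hence deciding for \<open>j \<noteq> i\<close> forces \<open>D < 2|X|\<epsilon> + 2\<delta>\<close>: once \<open>2|X|\<epsilon> + 2\<delta> \<le> D\<close>, an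
  error needs an atypical training or test sequence. Empirical frequencies are binomial, so
  Hoeffding's inequality with union bounds over the \<open>M|X|\<close> training symbols and the at most
  \<open>(M-1)\<^sup>2\<close> Scheffe sets bounds these events. The choice \<open>\<epsilon> = 3s/2\<close>, \<open>\<delta> = \<surd>\<alpha> s\<close> with
  \<open>s = D / (3|X| + 2\<surd>\<alpha>)\<close>, together with the trivial bound 1, yields the stated rate.
\<close>

section \<open>Total variation on a finite alphabet\<close>

lemma sum_le_sum_nonneg_part:
  fixes h :: "'a::finite \<Rightarrow> real"
  shows "(\<Sum>a\<in>B. h a) \<le> (\<Sum>a | 0 \<le> h a. h a)"
proof -
  have "(\<Sum>a\<in>B. h a) \<le> (\<Sum>a\<in>B. max (h a) 0)" by (intro sum_mono) auto
  also have "\<dots> \<le> (\<Sum>a\<in>UNIV. max (h a) 0)" by (intro sum_mono2) auto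
  also have "\<dots> = (\<Sum>a\<in>UNIV. if 0 \<le> h a then h a else 0)" by (intro sum.cong) auto
  also have "\<dots> = (\<Sum>a | 0 \<le> h a. h a)"
    using sum.inter_filter[of UNIV h "\<lambda>a. 0 \<le> h a"] by simp
  finally show ?thesis .
qed

lemma sum_split_Compl:
  fixes h :: "'a::finite \<Rightarrow> real"
  shows "(\<Sum>a\<in>UNIV. h a) = (\<Sum>a\<in>B. h a) + (\<Sum>a\<in>-B. h a)"
  by (subst sum.union_disjoint[symmetric]) auto

lemma abs_sum_le_sum_nonneg_part:
  fixes h :: "'a::finite \<Rightarrow> real"
  assumes "(\<Sum>a\<in>UNIV. h a) = 0"
  shows "\<bar>\<Sum>a\<in>B. h a\<bar> \<le> (\<Sum>a | 0 \<le> h a. h a)"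
  using assms sum_split_Compl[of h B] sum_le_sum_nonneg_part[of h B] sum_le_sum_nonneg_part[of h "-B"]
  by linarith

lemma sum_nonneg_part_eq_half_sum_abs:
  fixes h :: "'a::finite \<Rightarrow> real"
  assumes "(\<Sum>a\<in>UNIV. h a) = 0"
  shows "(\<Sum>a | 0 \<le> h a. h a) = (\<Sum>a\<in>UNIV. \<bar>h a\<bar>) / 2"
proof -
  define A where "A = {a. 0 \<le> h a}"
  have "(\<Sum>a\<in>A. \<bar>h a\<bar>) = (\<Sum>a\<in>A. h a)" by (intro sum.cong) (auto simp: A_def)
  moreover have "(\<Sum>a\<in>-A. \<bar>h a\<bar>) = - (\<Sum>a\<in>-A. h a)"
    by (subst sum_negf[symmetric], intro sum.cong) (auto simp: A_def)
  ultimately show ?thesis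
    using assms sum_split_Compl[of h A] sum_split_Compl[of "\<lambda>a. \<bar>h a\<bar>" A] unfolding A_def by linarith
qed

lemma tv_dist_eq_sum_nonneg_part:
  "tv_dist p q = (\<Sum>a | 0 \<le> pmf p a - pmf q a. pmf p a - pmf q a)"
  unfolding tv_dist_def by (subst sum_nonneg_part_eq_half_sum_abs) (simp_all add: sum_subtractf sum_pmf_eq_1)

lemma tv_dist_commute: "tv_dist p q = tv_dist q p"
  unfolding tv_dist_def by (simp add: abs_minus_commute)

lemma tv_dist_nonneg: "tv_dist p q \<ge> 0"
  unfolding tv_dist_def by (simp add: sum_nonneg)

lemma Min_pairwise_tv_dist:
  fixes P :: "nat \<Rightarrow> 'a::finite pmf" and M :: nat
  defines "D \<equiv> Min {tv_dist (P i) (P j) | i j. i \<in> {1..M} \<and> j \<in> {1..M} \<and> i \<noteq> j}"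
  assumes "M \<ge> 2"
  shows "D \<ge> 0" and "\<forall>k\<in>{1..M}. \<forall>l\<in>{1..M}. k \<noteq> l \<longrightarrow> D \<le> tv_dist (P k) (P l)"
proof -
  let ?S = "{tv_dist (P i) (P j) | i j. i \<in> {1..M} \<and> j \<in> {1..M} \<and> i \<noteq> j}"
  have "?S \<subseteq> (\<lambda>(i, j). tv_dist (P i) (P j)) ` ({1..M} \<times> {1..M})" by force
  hence fin: "finite ?S" by (rule finite_subset) simp
  have "tv_dist (P 1) (P 2) \<in> ?S" using assms(2) by force
  hence "D \<in> ?S" unfolding D_def using fin by (intro Min_in) auto
  thus "D \<ge> 0" using tv_dist_nonneg by auto
  show "\<forall>k\<in>{1..M}. \<forall>l\<in>{1..M}. k \<noteq> l \<longrightarrow> D \<le> tv_dist (P k) (P l)"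
    unfolding D_def using fin by (blast intro: Min_le)
qed

section \<open>Empirical distributions and Scheffe sets\<close>

lemma sum_emp_eq_1:
  fixes t :: "nat \<Rightarrow> nat \<Rightarrow> 'a::finite"
  assumes "N \<ge> 1"
  shows "(\<Sum>a\<in>UNIV. emp N t k a) = 1"
proof -
  have "(\<Sum>a\<in>UNIV. card {m\<in>{1..N}. t k m = a}) = card (\<Union>a. {m\<in>{1..N}. t k m = a})"
    by (rule card_UN_disjoint[symmetric]) auto
  also have "(\<Union>a. {m\<in>{1..N}. t k m = a}) = {1..N}" by auto
  finally show ?thesis
    using assms unfolding emp_def by (simp add: sum_divide_distrib[symmetric] flip: of_nat_sum)
qed

lemma emp_set_deviation_lt:
  fixes t :: "nat \<Rightarrow> nat \<Rightarrow> 'a::finite"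
  assumes "N \<ge> 1" and close: "\<forall>a. \<bar>emp N t k a - pmf p a\<bar> < \<epsilon>"
  shows "\<bar>emp_set N t k B - measure_pmf.prob p B\<bar> < real CARD('a) * \<epsilon> / 2"
proof -
  define h where "h a = emp N t k a - pmf p a" for a
  have h0: "(\<Sum>a\<in>UNIV. h a) = 0"
    using sum_emp_eq_1[OF assms(1)] by (simp add: h_def sum_subtractf sum_pmf_eq_1)
  have "\<bar>emp_set N t k B - measure_pmf.prob p B\<bar> = \<bar>\<Sum>a\<in>B. h a\<bar>"
    by (simp add: emp_set_def h_def measure_measure_pmf_finite sum_subtractf)
  also have "\<dots> \<le> (\<Sum>a\<in>UNIV. \<bar>h a\<bar>) / 2"
    using abs_sum_le_sum_nonneg_part[OF h0] sum_nonneg_part_eq_half_sum_abs[OF h0] by simp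
  also have "(\<Sum>a\<in>UNIV. \<bar>h a\<bar>) < (\<Sum>a\<in>(UNIV::'a set). \<epsilon>)"
    using close by (intro sum_strict_mono) (auto simp: h_def)
  finally show ?thesis by simp
qed

lemma finite_scheffe_family: "finite (scheffe_family M N t)"
proof -
  have "scheffe_family M N t \<subseteq> (\<lambda>(k, l). scheffe N t k l) ` ({1..M} \<times> {1..M})"
    unfolding scheffe_family_def by force
  thus ?thesis by (rule finite_subset) simp
qed

lemma card_scheffe_family_le: "card (scheffe_family M N t) \<le> (M - 1)\<^sup>2"
proof -
  have "scheffe_family M N t \<subseteq> (\<lambda>(k, l). scheffe N t k l) ` ({1..M - 1} \<times> {2..M})"
    unfolding scheffe_family_def by force
  hence "card (scheffe_family M N t) \<le> card ((\<lambda>(k, l). scheffe N t k l) ` ({1..M - 1} \<times> {2..M}))"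
    by (intro card_mono) auto
  also have "\<dots> \<le> card ({1..M - 1} \<times> {2..M})" by (rule card_image_le) simp
  finally show ?thesis by (simp add: power2_eq_square)
qed

lemma dgl_score_ge:
  "A \<in> scheffe_family M N t \<Longrightarrow> \<bar>emp_set N t j A - mu_n n x A\<bar> \<le> dgl_score M N n t x j"
  unfolding dgl_score_def using finite_scheffe_family by (intro Max_ge) auto

lemma dgl_score_lt:
  fixes t :: "nat \<Rightarrow> nat \<Rightarrow> 'a::finite"
  assumes "N \<ge> 1" "scheffe_family M N t \<noteq> {}"
    and train: "\<forall>a. \<bar>emp N t i a - pmf p a\<bar> < \<epsilon>"
    and test: "\<forall>A\<in>scheffe_family M N t. \<bar>mu_n n x A - measure_pmf.prob p A\<bar> < \<delta>"
  shows "dgl_score M N n t x i < real CARD('a) * \<epsilon> / 2 + \<delta>"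
  unfolding dgl_score_def
proof (subst Max_less_iff, safe)
  fix A assume A: "A \<in> scheffe_family M N t"
  show "\<bar>emp_set N t i A - mu_n n x A\<bar> < real CARD('a) * \<epsilon> / 2 + \<delta>"
    using emp_set_deviation_lt[OF assms(1) train, of A] test[rule_format, OF A] by linarith
qed (use assms(2) finite_scheffe_family in auto)

lemma tv_dist_lt_emp_set_scheffe:
  fixes t :: "nat \<Rightarrow> nat \<Rightarrow> 'a::finite"
  assumes "N \<ge> 1"
    and close_k: "\<forall>a. \<bar>emp N t k a - pmf (P k) a\<bar> < \<epsilon>"
    and close_l: "\<forall>a. \<bar>emp N t l a - pmf (P l) a\<bar> < \<epsilon>"
  shows "tv_dist (P k) (P l) - real CARD('a) * \<epsilon>
         < emp_set N t k (scheffe N t k l) - emp_set N t l (scheffe N t k l)"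
proof -
  define B where "B = {a. 0 \<le> pmf (P k) a - pmf (P l) a}"
  have "tv_dist (P k) (P l) = measure_pmf.prob (P k) B - measure_pmf.prob (P l) B"
    by (simp add: tv_dist_eq_sum_nonneg_part B_def measure_measure_pmf_finite sum_subtractf)
  moreover have "emp_set N t k B - emp_set N t l B
      \<le> emp_set N t k (scheffe N t k l) - emp_set N t l (scheffe N t k l)"
    using sum_le_sum_nonneg_part[of "\<lambda>a. emp N t k a - emp N t l a" B]
    by (simp add: emp_set_def scheffe_def sum_subtractf)
  ultimately show ?thesis
    using emp_set_deviation_lt[OF assms(1) close_k, of B] emp_set_deviation_lt[OF assms(1) close_l, of B]
    by linarith
qed

lemma misclassification_tv_dist_lt:
  fixes t :: "nat \<Rightarrow> nat \<Rightarrow> 'a::finite" and P :: "nat \<Rightarrow> 'a pmf"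
  assumes N: "N \<ge> 1" and ij: "i \<in> {1..M}" "j \<in> {1..M}" "i \<noteq> j"
    and score: "dgl_score M N n t x j \<le> dgl_score M N n t x i"
    and train: "\<forall>k\<in>{1..M}. \<forall>a. \<bar>emp N t k a - pmf (P k) a\<bar> < \<epsilon>"
    and test: "\<forall>A\<in>scheffe_family M N t. \<bar>mu_n n x A - measure_pmf.prob (P i) A\<bar> < \<delta>"
  shows "tv_dist (P i) (P j) < 2 * real CARD('a) * \<epsilon> + 2 * \<delta>"
proof -
  define k l where "k = min i j" and "l = max i j"
  have kl: "k < l" "k \<in> {1..M}" "l \<in> {1..M}" using ij by (auto simp: k_def l_def)
  define A where "A = scheffe N t k l"
  have A: "A \<in> scheffe_family M N t" unfolding A_def scheffe_family_def using kl by auto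
  have "tv_dist (P i) (P j) - real CARD('a) * \<epsilon> < emp_set N t k A - emp_set N t l A"
    using tv_dist_lt_emp_set_scheffe[OF N, of t k P \<epsilon> l] train kl ij
    by (auto simp: A_def k_def l_def min_def max_def tv_dist_commute)
  also have "\<dots> \<le> \<bar>emp_set N t i A - mu_n n x A\<bar> + \<bar>emp_set N t j A - mu_n n x A\<bar>"
    unfolding k_def l_def by (cases "i < j") (auto simp: min_def max_def)
  also have "\<dots> \<le> dgl_score M N n t x i + dgl_score M N n t x j"
    by (intro add_mono dgl_score_ge A)
  also have "\<dots> < real CARD('a) * \<epsilon> + 2 * \<delta>"
    using dgl_score_lt[OF N _ bspec[OF train ij(1)] test] A score by fastforce
  finally show ?thesis by linarith
qed

section \<open>Products of pmfs and Hoeffding's inequality\<close>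

text \<open>The default value \<open>undefined\<close> is the one used by \<open>PiE\<close>, so the support of these
  product pmfs lies in \<open>test_space\<close> and \<open>train_space\<close>.\<close>

definition iid_pmf :: "nat \<Rightarrow> 'a pmf \<Rightarrow> (nat \<Rightarrow> 'a) pmf" where
  "iid_pmf n p = Pi_pmf {1..n} undefined (\<lambda>_. p)"

definition train_pmf :: "nat \<Rightarrow> nat \<Rightarrow> (nat \<Rightarrow> 'a pmf) \<Rightarrow> (nat \<Rightarrow> nat \<Rightarrow> 'a) pmf" where
  "train_pmf M N P = Pi_pmf {1..M} undefined (\<lambda>j. iid_pmf N (P j))"

lemma sum_PiE_prod_pmf_eq_prob:
  assumes "finite A" "finite (PiE A B)" "\<And>j. j \<in> A \<Longrightarrow> set_pmf (p j) \<subseteq> B j"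
  shows "(\<Sum>f\<in>PiE A B. if Q f then \<Prod>j\<in>A. pmf (p j) (f j) else 0)
         = measure_pmf.prob (Pi_pmf A undefined p) {f. Q f}"
proof -
  have support: "set_pmf (Pi_pmf A undefined p) \<subseteq> PiE A B"
    using set_Pi_pmf_subset'[OF assms(1)] assms(3) by (fastforce simp: PiE_dflt_def PiE_def extensional_def)
  have "measure_pmf.prob (Pi_pmf A undefined p) {f. Q f}
      = measure_pmf.prob (Pi_pmf A undefined p) {f\<in>PiE A B. Q f}"
    using support by (intro measure_prob_cong_0) (auto simp: set_pmf_eq)
  also have "\<dots> = (\<Sum>f\<in>{f\<in>PiE A B. Q f}. pmf (Pi_pmf A undefined p) f)"
    using assms(2) by (simp add: measure_measure_pmf_finite)
  also have "\<dots> = (\<Sum>f\<in>PiE A B. if Q f then pmf (Pi_pmf A undefined p) f else 0)"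
    using assms(2) by (simp add: sum.inter_filter)
  also have "\<dots> = (\<Sum>f\<in>PiE A B. if Q f then \<Prod>j\<in>A. pmf (p j) (f j) else 0)"
    using assms(1) by (intro sum.cong refl if_cong pmf_Pi') (auto intro: PiE_arb)
  finally show ?thesis ..
qed

lemma pmf_iid_pmf:
  "x \<in> test_space n \<Longrightarrow> pmf (iid_pmf n p) x = (\<Prod>m\<in>{1..n}. pmf p (x m))"
  unfolding iid_pmf_def test_space_def by (rule pmf_Pi') (auto simp: PiE_def extensional_def)

lemma set_pmf_iid_pmf: "set_pmf (iid_pmf n p) \<subseteq> test_space n"
  unfolding iid_pmf_def test_space_def
  using set_Pi_pmf_subset'[of "{1..n}" undefined] by (fastforce simp: PiE_dflt_def PiE_def extensional_def)

lemma sum_test_space_eq_prob: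
  fixes p :: "'a::finite pmf"
  shows "(\<Sum>x\<in>test_space n. if Q x then \<Prod>m\<in>{1..n}. pmf p (x m) else 0)
         = measure_pmf.prob (iid_pmf n p) {x. Q x}"
  unfolding test_space_def iid_pmf_def by (rule sum_PiE_prod_pmf_eq_prob) (auto simp: finite_PiE)

lemma sum_train_space_eq_prob:
  fixes P :: "nat \<Rightarrow> 'a::finite pmf"
  shows "(\<Sum>t\<in>train_space M N. if Q t then \<Prod>j\<in>{1..M}. \<Prod>k\<in>{1..N}. pmf (P j) (t j k) else 0)
         = measure_pmf.prob (train_pmf M N P) {t. Q t}"
proof -
  have "(\<Sum>t\<in>train_space M N. if Q t then \<Prod>j\<in>{1..M}. \<Prod>k\<in>{1..N}. pmf (P j) (t j k) else 0)
      = (\<Sum>t\<in>PiE {1..M} (\<lambda>_. test_space N). if Q t then \<Prod>j\<in>{1..M}. pmf (iid_pmf N (P j)) (t j) else 0)"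
    unfolding train_space_def test_space_def[symmetric]
    by (intro sum.cong refl if_cong prod.cong) (metis PiE_mem pmf_iid_pmf)
  also have "\<dots> = measure_pmf.prob (train_pmf M N P) {t. Q t}"
    unfolding train_pmf_def using set_pmf_iid_pmf
    by (intro sum_PiE_prod_pmf_eq_prob) (auto simp: test_space_def finite_PiE)
  finally show ?thesis .
qed

lemma prob_train_pmf_component:
  assumes "k \<in> {1..M}"
  shows "measure_pmf.prob (train_pmf M N P) {t. Q (t k)} = measure_pmf.prob (iid_pmf N (P k)) {u. Q u}"
proof -
  have "measure_pmf.prob (train_pmf M N P) {t. Q (t k)}
      = measure_pmf.prob (map_pmf (\<lambda>t. t k) (train_pmf M N P)) {u. Q u}"
    by (simp add: vimage_def)
  also have "map_pmf (\<lambda>t. t k) (train_pmf M N P) = iid_pmf N (P k)"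
    unfolding train_pmf_def using assms by (simp add: Pi_pmf_component)
  finally show ?thesis .
qed

lemma map_pmf_mem_eq_bernoulli_pmf:
  "map_pmf (\<lambda>a. a \<in> A) p = bernoulli_pmf (measure_pmf.prob p A)"
proof (rule pmf_eqI)
  fix b :: bool
  show "pmf (map_pmf (\<lambda>a. a \<in> A) p) b = pmf (bernoulli_pmf (measure_pmf.prob p A)) b"
    by (cases b) (auto simp: pmf_map vimage_def measure_pmf.prob_compl[symmetric] set_diff_eq)
qed

lemma map_pmf_card_Pi_pmf_eq_binomial_pmf:
  assumes "finite I"
  shows "map_pmf (\<lambda>x. card {m\<in>I. x m \<in> A}) (Pi_pmf I d (\<lambda>_. p))
         = binomial_pmf (card I) (measure_pmf.prob p A)"
proof -
  have "binomial_pmf (card I) (measure_pmf.prob p A)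
      = map_pmf (\<lambda>f. card {m\<in>I. f m}) (Pi_pmf I (d \<in> A) (\<lambda>_. map_pmf (\<lambda>a. a \<in> A) p))"
    unfolding map_pmf_mem_eq_bernoulli_pmf using assms by (rule binomial_pmf_altdef') auto
  also have "\<dots> = map_pmf (\<lambda>x. card {m\<in>I. x m \<in> A}) (Pi_pmf I d (\<lambda>_. p))"
    using assms by (simp add: Pi_pmf_map map_pmf_comp o_def)
  finally show ?thesis ..
qed

lemma prob_iid_pmf_deviation_le:
  assumes "n \<ge> 1" "\<epsilon> \<ge> 0"
  shows "measure_pmf.prob (iid_pmf n p) {x. \<epsilon> \<le> \<bar>mu_n n x A - measure_pmf.prob p A\<bar>}
         \<le> 2 * exp (-2 * real n * \<epsilon>\<^sup>2)"
proof -
  interpret binomial_distribution n "measure_pmf.prob p A"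
    by unfold_locales auto
  have "measure_pmf.prob (iid_pmf n p) {x. \<epsilon> \<le> \<bar>mu_n n x A - measure_pmf.prob p A\<bar>}
      = measure_pmf.prob (map_pmf (\<lambda>x. card {m\<in>{1..n}. x m \<in> A}) (iid_pmf n p))
          {k. \<epsilon> \<le> \<bar>real k / real n - measure_pmf.prob p A\<bar>}"
    by (simp add: mu_n_def vimage_def)
  also have "\<dots> \<le> 2 * exp (-2 * real n * \<epsilon>\<^sup>2)"
    unfolding iid_pmf_def map_pmf_card_Pi_pmf_eq_binomial_pmf[OF finite_atLeastAtMost]
    using prob_abs_ge' assms by simp
  finally show ?thesis .
qed

lemma measure_pmf_prob_Bex_le:
  assumes "finite I"
  shows "measure_pmf.prob p {x. \<exists>i\<in>I. Q i x} \<le> (\<Sum>i\<in>I. measure_pmf.prob p {x. Q i x})"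
proof -
  have "{x. \<exists>i\<in>I. Q i x} = (\<Union>i\<in>I. {x. Q i x})" by auto
  thus ?thesis using measure_UNION_le[OF assms, of "\<lambda>i. {x. Q i x}" p] by simp
qed

lemma prob_iid_pmf_Bex_deviation_le:
  assumes "finite F" "n \<ge> 1" "\<delta> \<ge> 0"
  shows "measure_pmf.prob (iid_pmf n p) {x. \<exists>A\<in>F. \<delta> \<le> \<bar>mu_n n x A - measure_pmf.prob p A\<bar>}
         \<le> card F * (2 * exp (-2 * real n * \<delta>\<^sup>2))"
proof -
  have "measure_pmf.prob (iid_pmf n p) {x. \<exists>A\<in>F. \<delta> \<le> \<bar>mu_n n x A - measure_pmf.prob p A\<bar>}
      \<le> (\<Sum>A\<in>F. measure_pmf.prob (iid_pmf n p) {x. \<delta> \<le> \<bar>mu_n n x A - measure_pmf.prob p A\<bar>})"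
    by (rule measure_pmf_prob_Bex_le[OF assms(1)])
  also have "\<dots> \<le> (\<Sum>A\<in>F. 2 * exp (-2 * real n * \<delta>\<^sup>2))"
    by (intro sum_mono prob_iid_pmf_deviation_le assms)
  finally show ?thesis by simp
qed

lemma prob_train_pmf_deviation_le:
  fixes P :: "nat \<Rightarrow> 'a::finite pmf"
  assumes "N \<ge> 1" "\<epsilon> \<ge> 0"
  shows "measure_pmf.prob (train_pmf M N P) {t. \<exists>k\<in>{1..M}. \<exists>a. \<epsilon> \<le> \<bar>emp N t k a - pmf (P k) a\<bar>}
         \<le> real M * real CARD('a) * (2 * exp (-2 * real N * \<epsilon>\<^sup>2))"
proof -
  have "measure_pmf.prob (train_pmf M N P) {t. \<exists>k\<in>{1..M}. \<exists>a. \<epsilon> \<le> \<bar>emp N t k a - pmf (P k) a\<bar>}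
      \<le> (\<Sum>k\<in>{1..M}. measure_pmf.prob (train_pmf M N P) {t. \<exists>a. \<epsilon> \<le> \<bar>emp N t k a - pmf (P k) a\<bar>})"
    by (rule measure_pmf_prob_Bex_le) simp
  also have "\<dots> \<le> (\<Sum>k\<in>{1..M}. \<Sum>a\<in>UNIV. measure_pmf.prob (train_pmf M N P) {t. \<epsilon> \<le> \<bar>emp N t k a - pmf (P k) a\<bar>})"
    by (intro sum_mono measure_pmf_prob_Bex_le[of "UNIV :: 'a set", simplified])
  also have "\<dots> \<le> (\<Sum>k\<in>{1..M}. \<Sum>a\<in>(UNIV::'a set). 2 * exp (-2 * real N * \<epsilon>\<^sup>2))"
  proof (intro sum_mono)
    fix k a assume k: "k \<in> {1..M}"
    have "measure_pmf.prob (train_pmf M N P) {t. \<epsilon> \<le> \<bar>emp N t k a - pmf (P k) a\<bar>}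
        = measure_pmf.prob (iid_pmf N (P k)) {u. \<epsilon> \<le> \<bar>mu_n N u {a} - measure_pmf.prob (P k) {a}\<bar>}"
      using prob_train_pmf_component[OF k] by (simp add: emp_def mu_n_def measure_pmf_single)
    also have "\<dots> \<le> 2 * exp (-2 * real N * \<epsilon>\<^sup>2)" by (rule prob_iid_pmf_deviation_le[OF assms])
    finally show "measure_pmf.prob (train_pmf M N P) {t. \<epsilon> \<le> \<bar>emp N t k a - pmf (P k) a\<bar>}
        \<le> 2 * exp (-2 * real N * \<epsilon>\<^sup>2)" .
  qed
  finally show ?thesis by simp
qed

section \<open>Error probability of the DGL test\<close>

definition cond_err_prob :: "nat \<Rightarrow> nat \<Rightarrow> nat \<Rightarrow> (nat \<Rightarrow> 'a pmf)
    \<Rightarrow> ((nat \<Rightarrow> nat \<Rightarrow> 'a) \<Rightarrow> (nat \<Rightarrow> 'a) \<Rightarrow> nat) \<Rightarrow> nat \<Rightarrow> real" where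
  "cond_err_prob M N n P dec i =
     (\<Sum>t\<in>train_space M N. \<Sum>x\<in>test_space n. if dec t x \<noteq> i then joint_prob M N n P i t x else 0)"

lemma cond_err_prob_eq:
  fixes P :: "nat \<Rightarrow> 'a::finite pmf"
  shows "cond_err_prob M N n P dec i = (\<Sum>t\<in>train_space M N. (\<Prod>j\<in>{1..M}. \<Prod>k\<in>{1..N}. pmf (P j) (t j k))
           * measure_pmf.prob (iid_pmf n (P i)) {x. dec t x \<noteq> i})"
  unfolding cond_err_prob_def joint_prob_def sum_test_space_eq_prob[symmetric] sum_distrib_left
  by (intro sum.cong refl) auto

lemma sum_train_space_prod_pmf_eq_1:
  fixes P :: "nat \<Rightarrow> 'a::finite pmf"
  shows "(\<Sum>t\<in>train_space M N. \<Prod>j\<in>{1..M}. \<Prod>k\<in>{1..N}. pmf (P j) (t j k)) = 1"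
  using sum_train_space_eq_prob[where Q="\<lambda>_. True" and M=M and N=N and P=P] by simp

lemma cond_err_prob_le_1:
  fixes P :: "nat \<Rightarrow> 'a::finite pmf"
  shows "cond_err_prob M N n P dec i \<le> 1"
proof -
  have "cond_err_prob M N n P dec i \<le> (\<Sum>t\<in>train_space M N. (\<Prod>j\<in>{1..M}. \<Prod>k\<in>{1..N}. pmf (P j) (t j k)) * 1)"
    unfolding cond_err_prob_eq by (intro sum_mono mult_left_mono measure_pmf.prob_le_1 prod_nonneg) auto
  thus ?thesis unfolding mult_1_right sum_train_space_prod_pmf_eq_1 .
qed

lemma misclassification_prob_le:
  fixes P :: "nat \<Rightarrow> 'a::finite pmf"
  assumes "n \<ge> 1" "N \<ge> 1" "i \<in> {1..M}" "\<delta> \<ge> 0"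
    and dec: "\<forall>x\<in>test_space n. dec t x \<in> {1..M} \<and> (\<forall>j\<in>{1..M}. dgl_score M N n t x (dec t x) \<le> dgl_score M N n t x j)"
    and D: "\<forall>k\<in>{1..M}. \<forall>l\<in>{1..M}. k \<noteq> l \<longrightarrow> D \<le> tv_dist (P k) (P l)"
    and accuracy: "2 * real CARD('a) * \<epsilon> + 2 * \<delta> \<le> D"
    and train: "\<forall>k\<in>{1..M}. \<forall>a. \<bar>emp N t k a - pmf (P k) a\<bar> < \<epsilon>"
  shows "(\<Sum>x\<in>test_space n. if dec t x \<noteq> i then \<Prod>m\<in>{1..n}. pmf (P i) (x m) else 0)
         \<le> (real M - 1)\<^sup>2 * (2 * exp (-2 * real n * \<delta>\<^sup>2))"
proof -
  let ?F = "scheffe_family M N t"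
  have "(\<Sum>x\<in>test_space n. if dec t x \<noteq> i then \<Prod>m\<in>{1..n}. pmf (P i) (x m) else 0)
      \<le> (\<Sum>x\<in>test_space n. if \<exists>A\<in>?F. \<delta> \<le> \<bar>mu_n n x A - measure_pmf.prob (P i) A\<bar>
                            then \<Prod>m\<in>{1..n}. pmf (P i) (x m) else 0)"
  proof (intro sum_mono)
    fix x :: "nat \<Rightarrow> 'a" assume x: "x \<in> test_space n"
    have "\<exists>A\<in>?F. \<delta> \<le> \<bar>mu_n n x A - measure_pmf.prob (P i) A\<bar>" if wrong: "dec t x \<noteq> i"
    proof (rule ccontr)
      assume "\<not> (\<exists>A\<in>?F. \<delta> \<le> \<bar>mu_n n x A - measure_pmf.prob (P i) A\<bar>)"
      hence test: "\<forall>A\<in>?F. \<bar>mu_n n x A - measure_pmf.prob (P i) A\<bar> < \<delta>" by (auto simp: not_le)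
      have "tv_dist (P i) (P (dec t x)) < 2 * real CARD('a) * \<epsilon> + 2 * \<delta>"
        using dec x wrong assms(3) by (intro misclassification_tv_dist_lt[OF assms(2,3) _ _ _ train test]) auto
      moreover have "D \<le> tv_dist (P i) (P (dec t x))" using D dec x assms(3) wrong by auto
      ultimately show False using accuracy by linarith
    qed
    thus "(if dec t x \<noteq> i then \<Prod>m\<in>{1..n}. pmf (P i) (x m) else 0)
        \<le> (if \<exists>A\<in>?F. \<delta> \<le> \<bar>mu_n n x A - measure_pmf.prob (P i) A\<bar> then \<Prod>m\<in>{1..n}. pmf (P i) (x m) else 0)"
      by (auto intro: prod_nonneg)
  qed
  also have "\<dots> \<le> card ?F * (2 * exp (-2 * real n * \<delta>\<^sup>2))"
    unfolding sum_test_space_eq_prob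
    by (intro prob_iid_pmf_Bex_deviation_le finite_scheffe_family assms)
  also have "\<dots> \<le> (real M - 1)\<^sup>2 * (2 * exp (-2 * real n * \<delta>\<^sup>2))"
  proof (intro mult_right_mono)
    have "real (card ?F) \<le> real ((M - 1)\<^sup>2)" using card_scheffe_family_le of_nat_le_iff by blast
    also have "\<dots> = (real M - 1)\<^sup>2" using assms(3) by simp
    finally show "real (card ?F) \<le> (real M - 1)\<^sup>2" .
  qed simp
  finally show ?thesis .
qed

lemma cond_err_prob_le:
  fixes P :: "nat \<Rightarrow> 'a::finite pmf"
  assumes "n \<ge> 1" "N \<ge> 1" "i \<in> {1..M}" "\<epsilon> \<ge> 0" "\<delta> \<ge> 0"
    and dec: "\<forall>t\<in>train_space M N. \<forall>x\<in>test_space n.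
           dec t x \<in> {1..M} \<and> (\<forall>j\<in>{1..M}. dgl_score M N n t x (dec t x) \<le> dgl_score M N n t x j)"
    and D: "\<forall>k\<in>{1..M}. \<forall>l\<in>{1..M}. k \<noteq> l \<longrightarrow> D \<le> tv_dist (P k) (P l)"
    and accuracy: "2 * real CARD('a) * \<epsilon> + 2 * \<delta> \<le> D"
  shows "cond_err_prob M N n P dec i
         \<le> real M * real CARD('a) * (2 * exp (-2 * real N * \<epsilon>\<^sup>2)) + (real M - 1)\<^sup>2 * (2 * exp (-2 * real n * \<delta>\<^sup>2))"
proof -
  define W where "W t = (\<Prod>j\<in>{1..M}. \<Prod>k\<in>{1..N}. pmf (P j) (t j k))" for t :: "nat \<Rightarrow> nat \<Rightarrow> 'a"
  define atypical where "atypical t \<longleftrightarrow> (\<exists>k\<in>{1..M}. \<exists>a. \<epsilon> \<le> \<bar>emp N t k a - pmf (P k) a\<bar>)" for t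
  define c where "c = (real M - 1)\<^sup>2 * (2 * exp (-2 * real n * \<delta>\<^sup>2))"
  have "measure_pmf.prob (iid_pmf n (P i)) {x. dec t x \<noteq> i} \<le> (if atypical t then 1 else 0) + c"
    if t: "t \<in> train_space M N" for t
  proof (cases "atypical t")
    case True
    thus ?thesis using measure_pmf.prob_le_1 by (simp add: c_def add_increasing2)
  next
    case False
    hence "\<forall>k\<in>{1..M}. \<forall>a. \<bar>emp N t k a - pmf (P k) a\<bar> < \<epsilon>" by (auto simp: atypical_def not_le)
    from misclassification_prob_le[OF assms(1-3,5) _ D accuracy this] dec t False
    show ?thesis by (simp add: c_def sum_test_space_eq_prob)
  qed
  hence "cond_err_prob M N n P dec i \<le> (\<Sum>t\<in>train_space M N. W t * ((if atypical t then 1 else 0) + c))"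
    unfolding cond_err_prob_eq W_def by (intro sum_mono mult_left_mono prod_nonneg) auto
  also have "\<dots> = (\<Sum>t\<in>train_space M N. if atypical t then W t else 0) + c * (\<Sum>t\<in>train_space M N. W t)"
  proof -
    have "W t * (if atypical t then 1 else 0) = (if atypical t then W t else 0)" for t by simp
    thus ?thesis by (simp add: distrib_left sum.distrib sum_distrib_left mult.commute)
  qed
  also have "\<dots> = measure_pmf.prob (train_pmf M N P) {t. atypical t} + c"
    unfolding W_def sum_train_space_eq_prob sum_train_space_prod_pmf_eq_1 by simp
  also have "measure_pmf.prob (train_pmf M N P) {t. atypical t} \<le> real M * real CARD('a) * (2 * exp (-2 * real N * \<epsilon>\<^sup>2))"
    unfolding atypical_def by (rule prob_train_pmf_deviation_le[OF assms(2,4)])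
  finally show ?thesis by (simp add: c_def)
qed

text \<open>The training term is quadratic in \<open>E\<close>, so it is absorbed as soon as the asserted bound
  is below the trivial bound 1.\<close>

lemma le_min_one_tail_bound:
  fixes M K E p :: real
  assumes M: "M \<ge> 2" and K: "K \<ge> 1" and E: "E \<ge> 0"
    and le1: "p \<le> 1" and tail: "p \<le> M * K * (2 * E\<^sup>2) + (M - 1)\<^sup>2 * (2 * E)"
  shows "p \<le> 2 * M * max ((M - 1)\<^sup>2) K * E"
proof (cases "2 * M * max ((M - 1)\<^sup>2) K * E \<ge> 1")
  case True
  thus ?thesis using le1 by linarith
next
  case False
  define Q where "Q = max ((M - 1)\<^sup>2) K"
  have "M * K * E \<le> M * Q * E" using M E by (intro mult_right_mono mult_left_mono) (auto simp: Q_def)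
  hence "2 * (M * K * E) \<le> 1" using False by (simp add: Q_def)
  hence "2 * (M * K * E) * E \<le> 1 * E" using E by (rule mult_right_mono)
  hence "M * K * (2 * E\<^sup>2) \<le> E" by (simp add: power2_eq_square algebra_simps)
  moreover have "(2 * (M - 1)\<^sup>2 + 1) * E \<le> (2 * M * Q) * E"
  proof (intro mult_right_mono E)
    have "4 * Q \<le> 2 * M * Q" using M K by (intro mult_right_mono) (auto simp: Q_def)
    thus "2 * (M - 1)\<^sup>2 + 1 \<le> 2 * M * Q" using K by (simp add: Q_def)
  qed
  ultimately show ?thesis using tail by (simp add: Q_def algebra_simps)
qed

lemma err_prob_le:
  fixes P :: "nat \<Rightarrow> 'a::finite pmf"
  assumes "M \<ge> 2" "n \<ge> 1" "N \<ge> 1" "\<forall>i\<in>{1..M}. \<pi> i > 0" "(\<Sum>i\<in>{1..M}. \<pi> i) = 1"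
    and dec: "\<forall>t\<in>train_space M N. \<forall>x\<in>test_space n.
           dec t x \<in> {1..M} \<and> (\<forall>j\<in>{1..M}. dgl_score M N n t x (dec t x) \<le> dgl_score M N n t x j)"
    and D: "\<forall>k\<in>{1..M}. \<forall>l\<in>{1..M}. k \<noteq> l \<longrightarrow> D \<le> tv_dist (P k) (P l)"
    and "s \<ge> 0" and accuracy: "(3 * real CARD('a) + 2 * sqrt (real N / real n)) * s \<le> D"
  shows "err_prob M N n P \<pi> dec \<le> 2 * real M * max ((real M - 1)\<^sup>2) (real CARD('a)) * exp (-2 * real N * s\<^sup>2)"
proof -
  define E where "E = exp (-2 * real N * s\<^sup>2)"
  \<comment> \<open>\<open>\<epsilon> = 3s/2\<close> and \<open>\<delta> = \<surd>(N/n) s\<close> give \<open>2|X|\<epsilon> + 2\<delta> \<le> D\<close>, training exponent \<open>\<ge> 4Ns\<^sup>2\<close> and test exponent \<open>2Ns\<^sup>2\<close>.\<close>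
  define bound where "bound = 2 * real M * max ((real M - 1)\<^sup>2) (real CARD('a)) * E"
  have "cond_err_prob M N n P dec i \<le> bound" if i: "i \<in> {1..M}" for i
    unfolding bound_def
  proof (rule le_min_one_tail_bound)
    have "exp (-2 * real N * (3 / 2 * s)\<^sup>2) \<le> E\<^sup>2"
      unfolding E_def power2_eq_square mult_exp_exp using assms(8) by simp
    hence train: "real M * real CARD('a) * (2 * exp (-2 * real N * (3 / 2 * s)\<^sup>2))
        \<le> real M * real CARD('a) * (2 * E\<^sup>2)" by (intro mult_left_mono) auto
    have test: "exp (-2 * real n * (sqrt (real N / real n) * s)\<^sup>2) = E"
      unfolding E_def using assms(2) by (simp add: power_mult_distrib)
    have "cond_err_prob M N n P dec i \<le> real M * real CARD('a) * (2 * exp (-2 * real N * (3 / 2 * s)\<^sup>2))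
        + (real M - 1)\<^sup>2 * (2 * exp (-2 * real n * (sqrt (real N / real n) * s)\<^sup>2))"
      using accuracy assms(8) by (intro cond_err_prob_le[OF assms(2,3) i _ _ dec D]) (auto simp: algebra_simps)
    with train show "cond_err_prob M N n P dec i
        \<le> real M * real CARD('a) * (2 * E\<^sup>2) + (real M - 1)\<^sup>2 * (2 * E)"
      unfolding test by linarith
  qed (use assms(1) cond_err_prob_le_1 in \<open>auto simp: E_def\<close>)
  hence "err_prob M N n P \<pi> dec \<le> (\<Sum>i\<in>{1..M}. \<pi> i * bound)"
    unfolding err_prob_def cond_err_prob_def[symmetric]
    using assms(4) by (intro sum_mono mult_left_mono) (auto simp: less_imp_le)
  also have "\<dots> = bound" using assms(5) by (simp flip: sum_distrib_right)
  finally show ?thesis unfolding bound_def E_def .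
qed

lemma exp_rate_eq:
  fixes n N M K D c :: real
  assumes "n > 0" "M > 1" "K > 0"
  shows "exp (- n * (2 * (N / n) * D\<^sup>2 / c\<^sup>2 - max (2 * ln (M - 1) / n) (ln K / n)))
         = max ((M - 1)\<^sup>2) K * exp (-2 * N * (D / c)\<^sup>2)"
proof -
  have "- n * (2 * (N / n) * D\<^sup>2 / c\<^sup>2 - max (2 * ln (M - 1) / n) (ln K / n))
      = max (2 * ln (M - 1)) (ln K) + (-2 * N * (D / c)\<^sup>2)"
    using assms(1) max_divide_distrib_right[of "2 * ln (M - 1)" "ln K" n] by (simp add: field_simps)
  moreover have "exp (max (2 * ln (M - 1)) (ln K)) = max (exp (2 * ln (M - 1))) (exp (ln K))"
    by (simp add: max_def)
  moreover have "exp (2 * ln (M - 1)) = (M - 1)\<^sup>2"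
    using assms(2) exp_of_nat_mult[of 2 "ln (M - 1)"] by simp
  ultimately show ?thesis using assms(3) by (simp only: exp_add exp_ln)
qed

theorem corollary2:
  fixes P :: "nat \<Rightarrow> 'a::finite pmf"
    and \<pi> :: "nat \<Rightarrow> real"
    and M N n :: nat
    and dec :: "(nat \<Rightarrow> nat \<Rightarrow> 'a) \<Rightarrow> (nat \<Rightarrow> 'a) \<Rightarrow> nat"
  assumes "M \<ge> 2" and "n \<ge> 1" and "N \<ge> 1"
    and "\<forall>i\<in>{1..M}. \<pi> i > 0" and "(\<Sum>i\<in>{1..M}. \<pi> i) = 1"
    and "\<forall>t\<in>train_space M N. \<forall>x\<in>test_space n.
           dec t x \<in> {1..M} \<and> (\<forall>j\<in>{1..M}. dgl_score M N n t x (dec t x) \<le> dgl_score M N n t x j)"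
  shows "let \<alpha> = real N / real n;
             D = Min {tv_dist (P i) (P j) | i j. i \<in> {1..M} \<and> j \<in> {1..M} \<and> i \<noteq> j};
             X = real (card (UNIV :: 'a set))
         in err_prob M N n P \<pi> dec
            \<le> 2 * real M * exp (- real n * (2 * \<alpha> * D\<^sup>2 / (3 * X + 2 * sqrt \<alpha>)\<^sup>2
                 - max (2 * ln (real M - 1) / real n) (ln X / real n)))"
proof -
  define D where "D = Min {tv_dist (P i) (P j) | i j. i \<in> {1..M} \<and> j \<in> {1..M} \<and> i \<noteq> j}"
  define c where "c = 3 * real CARD('a) + 2 * sqrt (real N / real n)"
  note D_props = Min_pairwise_tv_dist[OF assms(1), of P, folded D_def]
  have c: "c > 0" unfolding c_def by (simp add: add_pos_nonneg)
  have "err_prob M N n P \<pi> dec \<le> 2 * real M * max ((real M - 1)\<^sup>2) (real CARD('a)) * exp (-2 * real N * (D / c)\<^sup>2)"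
    using D_props c by (intro err_prob_le[OF assms]) (auto simp: c_def[symmetric])
  also have "\<dots> = 2 * real M * exp (- real n * (2 * (real N / real n) * D\<^sup>2 / c\<^sup>2
                 - max (2 * ln (real M - 1) / real n) (ln (real CARD('a)) / real n)))"
    by (subst exp_rate_eq) (use assms(1,2) in \<open>simp_all add: mult.assoc\<close>)
  finally show ?thesis unfolding Let_def D_def c_def .
qed

end
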